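(* Let $\rho,\mu\in\mathcal P_2(\mathbb R^d)$ with $\|\rho\|_\infty,\|\mu\|_\infty\le1$, and let $\rho_{\tau,m}$ be any one-step minimizer of $E_m(\cdot;\mu)$ starting from $\rho$. Then for $0<\tau<1$ and $m\ge2$, $$\int(\rho_{\tau,m}(x)-1)_+\,dx\le\sqrt{(2+C_d^2)/m}.$$
   Context: $\mathcal N(x)=\frac1{2\pi}\log|x|$ if $d=2$, $\mathcal N(x)=\frac{-1}{d(d-2)\alpha_d}|x|^{2-d}$ if $d\ne2$; $\mathbf N\mu=\mathcal N*\mu$. $\mathcal P_2$: probability measures with finite second moment, identified with densities; $W_2$: 2-Wasserstein distance. Fixed mollifier $\psi\in C_c^\infty$, $\psi\ge0$, $\int\psi=1$, $\psi_{1/m}(x)=m^d\psi(mx)$. $E_m(\nu;\mu)=\frac1{m-1}\int\nu^m+\int\psi_{1/m}*\mathbf N\mu\,d\nu$ if $\nu\ll\mathcal L^d$, else $+\infty$; $\rho_{\tau,m}\in\operatorname{argmin}_{\nu\in\mathcal P_2}\{\frac1{2\tau}W_2^2(\rho,\nu)+E_m(\nu;\mu)\}$. $C_d\ge1$ is a fixed constant depending only on $d$ such that for all $\rho,\nu\in\mathcal P_2$ with $\|\rho\|_\infty\le1$: $\|\nabla\mathbf N\rho\|_\infty\le C_d$, $\int\mathbf N\rho\,d\nu\ge-C_d$, and $|\nabla\mathbf N\rho(x)-\nabla\mathbf N\rho(y)|\le C_d\sigma(|x-y|)$ with $\sigma$ a fixed log-Lipschitz modulus. *)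

theory Defs
  imports "HOL-Analysis.Analysis" "HOL-Probability.Probability"
begin

fun Ck_fun :: "nat \<Rightarrow> ('a::euclidean_space \<Rightarrow> real) \<Rightarrow> bool" where
  "Ck_fun 0 f = continuous_on UNIV f"
| "Ck_fun (Suc k) f = (\<exists>g. (\<forall>x. GDERIV f x :> g x) \<and> (\<forall>i\<in>Basis. Ck_fun k (\<lambda>x. g x \<bullet> i)))"

definition Cc_inf :: "('a::euclidean_space \<Rightarrow> real) \<Rightarrow> bool" where
  "Cc_inf f \<longleftrightarrow> (\<forall>k. Ck_fun k f) \<and> compact (closure {x. f x \<noteq> 0})"

definition P2 :: "('a::euclidean_space \<Rightarrow> real) \<Rightarrow> bool" where
  "P2 \<nu> \<longleftrightarrow> \<nu> \<in> borel_measurable lborel \<and> (\<forall>x. 0 \<le> \<nu> x)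
     \<and> (\<integral>\<^sup>+x. ennreal (\<nu> x) \<partial>lborel) = 1
     \<and> (\<integral>\<^sup>+x. ennreal (norm x ^ 2 * \<nu> x) \<partial>lborel) < \<infinity>"

definition couplings :: "('a::euclidean_space \<Rightarrow> real) \<Rightarrow> ('a \<Rightarrow> real) \<Rightarrow> ('a \<times> 'a) measure set" where
  "couplings \<rho> \<nu> = {\<gamma>. sets \<gamma> = sets (borel :: ('a \<times> 'a) measure)
      \<and> distr \<gamma> borel fst = density lborel (\<lambda>x. ennreal (\<rho> x))
      \<and> distr \<gamma> borel snd = density lborel (\<lambda>x. ennreal (\<nu> x))}"

definition W2sq :: "('a::euclidean_space \<Rightarrow> real) \<Rightarrow> ('a \<Rightarrow> real) \<Rightarrow> ennreal" where
  "W2sq \<rho> \<nu> = (INF \<gamma>\<in>couplings \<rho> \<nu>. \<integral>\<^sup>+p. ennreal ((norm (fst p - snd p))\<^sup>2) \<partial>\<gamma>)"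

definition alpha_d :: "'a::euclidean_space itself \<Rightarrow> real" where
  "alpha_d _ = measure lborel (ball (0::'a) 1)"

definition Newton :: "'a::euclidean_space \<Rightarrow> real" where
  "Newton x = (if DIM('a) = 2 then ln (norm x) / (2 * pi)
     else - 1 / (real DIM('a) * (real DIM('a) - 2) * alpha_d TYPE('a)) * norm x powr (2 - real DIM('a)))"

definition Npot :: "('a::euclidean_space \<Rightarrow> real) \<Rightarrow> 'a \<Rightarrow> real" where
  "Npot \<mu> x = (\<integral>y. Newton (x - y) * \<mu> y \<partial>lborel)"

definition moll :: "('a::euclidean_space \<Rightarrow> real) \<Rightarrow> real \<Rightarrow> 'a \<Rightarrow> real" where
  "moll \<psi> m x = m ^ DIM('a) * \<psi> (m *\<^sub>R x)"

definition mollNpot :: "('a::euclidean_space \<Rightarrow> real) \<Rightarrow> real \<Rightarrow> ('a \<Rightarrow> real) \<Rightarrow> 'a \<Rightarrow> real" where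
  "mollNpot \<psi> m \<mu> x = (\<integral>z. moll \<psi> m (x - z) * Npot \<mu> z \<partial>lborel)"

text \<open>E_m(nu;mu); value +infinity when the integrals are not finite (only relevant for
  densities; non-absolutely-continuous measures have energy +infinity and never minimize).\<close>
definition Em :: "('a::euclidean_space \<Rightarrow> real) \<Rightarrow> real \<Rightarrow> ('a \<Rightarrow> real) \<Rightarrow> ('a \<Rightarrow> real) \<Rightarrow> ereal" where
  "Em \<psi> m \<mu> \<nu> =
     (if integrable lborel (\<lambda>x. \<nu> x powr m) \<and> integrable lborel (\<lambda>x. mollNpot \<psi> m \<mu> x * \<nu> x)
      then ereal ((\<integral>x. \<nu> x powr m \<partial>lborel) / (m - 1) + (\<integral>x. mollNpot \<psi> m \<mu> x * \<nu> x \<partial>lborel))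
      else \<infinity>)"

definition JKO_obj :: "('a::euclidean_space \<Rightarrow> real) \<Rightarrow> real \<Rightarrow> ('a \<Rightarrow> real) \<Rightarrow> real \<Rightarrow> ('a \<Rightarrow> real) \<Rightarrow> ('a \<Rightarrow> real) \<Rightarrow> ereal" where
  "JKO_obj \<psi> m \<mu> \<tau> \<rho> \<nu> = enn2ereal (W2sq \<rho> \<nu>) / ereal (2 * \<tau>) + Em \<psi> m \<mu> \<nu>"

definition is_JKO_minimizer :: "('a::euclidean_space \<Rightarrow> real) \<Rightarrow> real \<Rightarrow> ('a \<Rightarrow> real) \<Rightarrow> real \<Rightarrow> ('a \<Rightarrow> real) \<Rightarrow> ('a \<Rightarrow> real) \<Rightarrow> bool" where
  "is_JKO_minimizer \<psi> m \<mu> \<tau> \<rho> \<rho>' \<longleftrightarrow> P2 \<rho>' \<and>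
     (\<forall>\<nu>. P2 \<nu> \<longrightarrow> JKO_obj \<psi> m \<mu> \<tau> \<rho> \<rho>' \<le> JKO_obj \<psi> m \<mu> \<tau> \<rho> \<nu>)"

definition Cd_const :: "'a::euclidean_space itself \<Rightarrow> real \<Rightarrow> bool" where
  "Cd_const _ C \<longleftrightarrow> 1 \<le> C \<and>
     (\<forall>\<rho> \<nu> :: 'a \<Rightarrow> real. P2 \<rho> \<and> P2 \<nu> \<and> (AE x in lborel. \<rho> x \<le> 1) \<longrightarrow>
        (\<forall>x. \<exists>g. GDERIV (Npot \<rho>) x :> g \<and> norm g \<le> C)
        \<and> (\<integral>x. Npot \<rho> x * \<nu> x \<partial>lborel) \<ge> - C)"

end

theory Submission
  imports Defs
begin

text \<open>Mollification does not increase the Lipschitz constant \<open>C\<close> of the Newtonian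
  potential, so the potential term \<open>\<Phi>\<close> of the energy is \<open>C\<close>-Lipschitz. Along any coupling of
  \<open>\<rho>\<close> and \<open>\<rho>'\<close>, Young's inequality gives \<open>2\<tau>(\<Phi>(x) - \<Phi>(y)) \<le> |x - y|\<^sup>2 + C\<^sup>2\<tau>\<^sup>2\<close>, so the
  potential energy gained by moving from \<open>\<rho>\<close> to \<open>\<rho>'\<close> is paid for by the transport cost up
  to \<open>C\<^sup>2\<tau>/2\<close>. Comparing the minimizer with the competitor \<open>\<nu> = \<rho>\<close> therefore yields
  \<open>\<integral>\<rho>'\<^sup>m \<le> 1 + (m - 1)C\<^sup>2\<tau>/2\<close>. Integrating the pointwise inequality
  \<open>(t - 1)\<^sub>+ \<le> t\<^sup>m/(m(m - 1)s) + st/2\<close> with \<open>s = \<surd>((2 + C\<^sup>2)/m)\<close> turns this into the claim.\<close>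

section \<open>Lipschitz continuity of the mollified potential\<close>

lemma gderiv_bound_imp_lipschitz:
  fixes f :: "'a::euclidean_space \<Rightarrow> real"
  assumes "\<And>x. \<exists>g. GDERIV f x :> g \<and> norm g \<le> C"
  shows "C-lipschitz_on UNIV f"
proof -
  obtain g where g: "\<And>x. GDERIV f x :> g x" "\<And>x. norm (g x) \<le> C"
    using assms by metis
  have "onorm (\<lambda>h. h \<bullet> g x) \<le> C" for x
  proof -
    have "onorm (\<lambda>h. h \<bullet> g x) \<le> norm (g x)"
      by (rule onorm_le) (simp add: Cauchy_Schwarz_ineq2 mult.commute)
    then show ?thesis using g(2)[of x] by linarith
  qed
  moreover have "0 \<le> C"
    using g(2) norm_ge_zero order_trans by blast
  ultimately show ?thesis
    using g(1) by (intro bounded_derivative_imp_lipschitz[where f' = "\<lambda>x h. h \<bullet> g x"])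
      (auto simp: gderiv_def)
qed

lemma Npot_lipschitz:
  fixes \<mu> :: "'a::euclidean_space \<Rightarrow> real"
  assumes "Cd_const TYPE('a) C" "P2 \<mu>" "AE x in lborel. \<mu> x \<le> 1"
  shows "C-lipschitz_on UNIV (Npot \<mu>)"
proof (rule gderiv_bound_imp_lipschitz)
  show "\<exists>g. GDERIV (Npot \<mu>) x :> g \<and> norm g \<le> C" for x
    using assms unfolding Cd_const_def by meson
qed

lemma lborel_integral_affine:
  fixes f :: "'a::euclidean_space \<Rightarrow> real"
  assumes c: "c \<noteq> 0" and [measurable]: "f \<in> borel_measurable borel"
  shows "(\<integral>x. f x \<partial>lborel) = \<bar>c\<bar> ^ DIM('a) * (\<integral>x. f (t + c *\<^sub>R x) \<partial>lborel)"
proof -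
  have "(\<integral>x. f x \<partial>lborel)
      = (\<integral>x. f x \<partial>density (distr lborel borel (\<lambda>x. t + c *\<^sub>R x)) (\<lambda>_. \<bar>c\<bar> ^ DIM('a)))"
    using lborel_affine[OF c, of t] by simp
  also have "\<dots> = (\<integral>x. \<bar>c\<bar> ^ DIM('a) * f x \<partial>distr lborel borel (\<lambda>x. t + c *\<^sub>R x))"
    by (subst integral_density) auto
  also have "\<dots> = (\<integral>x. \<bar>c\<bar> ^ DIM('a) * f (t + c *\<^sub>R x) \<partial>lborel)"
    by (subst integral_distr) auto
  finally show ?thesis by simp
qed

lemma integrable_kernel_times_lipschitz:
  fixes K f :: "'a::euclidean_space \<Rightarrow> real"
  assumes K_int: "integrable lborel K" and K_supp: "bounded {x. K x \<noteq> 0}"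
    and f: "C-lipschitz_on UNIV f"
  shows "integrable lborel (\<lambda>w. K w * f (x - w))"
proof -
  obtain R where R: "\<And>w. K w \<noteq> 0 \<Longrightarrow> norm w \<le> R"
    using K_supp unfolding bounded_iff by blast
  have [measurable]: "f \<in> borel_measurable borel"
    using lipschitz_on_continuous_on[OF f] by (rule borel_measurable_continuous_onI)
  have "norm (K w * f (x - w)) \<le> norm (K w * (\<bar>f x\<bar> + C * R))" for w
  proof (cases "K w = 0")
    case False
    have "\<bar>f (x - w)\<bar> \<le> \<bar>f x\<bar> + C * norm w"
      using lipschitz_on_normD[OF f, of "x - w" x] by simp
    also have "\<dots> \<le> \<bar>f x\<bar> + C * R"
      using R[OF False] lipschitz_on_nonneg[OF f] by (simp add: mult_left_mono)
    finally show ?thesis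
      by (simp add: abs_mult mult_left_mono)
  qed simp
  then show ?thesis
    using K_int by (intro Bochner_Integration.integrable_bound[OF integrable_mult_left[OF K_int]])
      (auto intro: borel_measurable_integrable)
qed

lemma lipschitz_on_convolution:
  fixes K f :: "'a::euclidean_space \<Rightarrow> real"
  assumes [measurable]: "K \<in> borel_measurable borel"
    and K_nonneg: "\<And>x. 0 \<le> K x" and K_integral: "(\<integral>x. K x \<partial>lborel) = 1"
    and K_supp: "bounded {x. K x \<noteq> 0}" and f: "C-lipschitz_on UNIV f"
  shows "C-lipschitz_on UNIV (\<lambda>x. \<integral>z. K (x - z) * f z \<partial>lborel)"
proof (rule lipschitz_onI)
  show "0 \<le> C"
    using f by (rule lipschitz_on_nonneg)
  have K_int: "integrable lborel K"
    using K_integral not_integrable_integral_eq by fastforce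
  have [measurable]: "f \<in> borel_measurable borel"
    using lipschitz_on_continuous_on[OF f] by (rule borel_measurable_continuous_onI)
  have reflect: "(\<integral>z. K (x - z) * f z \<partial>lborel) = (\<integral>w. K w * f (x - w) \<partial>lborel)" for x
    using lborel_integral_affine[of "-1" "\<lambda>z. K (x - z) * f z" x] by simp
  have int: "integrable lborel (\<lambda>w. K w * f (x - w))" for x
    using integrable_kernel_times_lipschitz[OF K_int K_supp f] .
  fix x y :: 'a
  have "(\<integral>z. K (x - z) * f z \<partial>lborel) - (\<integral>z. K (y - z) * f z \<partial>lborel)
      = (\<integral>w. K w * (f (x - w) - f (y - w)) \<partial>lborel)"
    unfolding reflect using int[of x] int[of y] by (simp add: right_diff_distrib)
  also have "norm \<dots> \<le> (\<integral>w. K w * (C * norm (x - y)) \<partial>lborel)"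
  proof (rule Bochner_Integration.integral_norm_bound_integral)
    show "integrable lborel (\<lambda>w. K w * (f (x - w) - f (y - w)))"
      using int[of x] int[of y] by (simp add: right_diff_distrib)
    show "integrable lborel (\<lambda>w. K w * (C * norm (x - y)))"
      using K_int by (rule integrable_mult_left)
    show "norm (K w * (f (x - w) - f (y - w))) \<le> K w * (C * norm (x - y))" for w
      using lipschitz_on_normD[OF f, of "x - w" "y - w"] K_nonneg[of w]
      by (simp add: abs_mult mult_left_mono)
  qed
  also have "\<dots> = C * dist x y"
    using K_integral by (simp add: dist_norm)
  finally show "dist (\<integral>z. K (x - z) * f z \<partial>lborel) (\<integral>z. K (y - z) * f z \<partial>lborel) \<le> C * dist x y"
    by (simp add: dist_real_def)
qed

lemma Cc_inf_continuous: "Cc_inf \<psi> \<Longrightarrow> continuous_on UNIV \<psi>"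
  unfolding Cc_inf_def by (metis Ck_fun.simps(1))

lemma Cc_inf_bounded_support: "Cc_inf \<psi> \<Longrightarrow> bounded {x. \<psi> x \<noteq> 0}"
  unfolding Cc_inf_def by (meson bounded_closure_image compact_imp_bounded bounded_subset closure_subset)

lemma integral_moll:
  fixes \<psi> :: "'a::euclidean_space \<Rightarrow> real"
  assumes "\<psi> \<in> borel_measurable borel" "0 < m"
  shows "(\<integral>x. moll \<psi> m x \<partial>lborel) = (\<integral>x. \<psi> x \<partial>lborel)"
  using lborel_integral_affine[of m \<psi> 0] assms by (simp add: moll_def)

lemma bounded_moll_support:
  assumes "bounded {x. \<psi> x \<noteq> 0}" "0 < m"
  shows "bounded {x. moll \<psi> m x \<noteq> 0}"
proof (rule bounded_subset)
  show "bounded ((\<lambda>x. (1 / m) *\<^sub>R x) ` {x. \<psi> x \<noteq> 0})"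
    using assms(1) by (rule bounded_scaling)
  show "{x. moll \<psi> m x \<noteq> 0} \<subseteq> (\<lambda>x. (1 / m) *\<^sub>R x) ` {x. \<psi> x \<noteq> 0}"
  proof
    fix x assume "x \<in> {x. moll \<psi> m x \<noteq> 0}"
    then have "\<psi> (m *\<^sub>R x) \<noteq> 0" by (simp add: moll_def)
    moreover have "x = (1 / m) *\<^sub>R (m *\<^sub>R x)" using assms(2) by simp
    ultimately show "x \<in> (\<lambda>x. (1 / m) *\<^sub>R x) ` {x. \<psi> x \<noteq> 0}" by blast
  qed
qed

lemma mollNpot_lipschitz:
  fixes \<psi> \<mu> :: "'a::euclidean_space \<Rightarrow> real"
  assumes "Cc_inf \<psi>" "\<And>x. 0 \<le> \<psi> x" "(\<integral>x. \<psi> x \<partial>lborel) = 1" "0 < m"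
    and "C-lipschitz_on UNIV (Npot \<mu>)"
  shows "C-lipschitz_on UNIV (mollNpot \<psi> m \<mu>)"
proof -
  have \<psi>_measurable[measurable]: "\<psi> \<in> borel_measurable borel"
    using Cc_inf_continuous[OF assms(1)] by (rule borel_measurable_continuous_onI)
  show ?thesis
    unfolding mollNpot_def[abs_def]
  proof (rule lipschitz_on_convolution)
    show "moll \<psi> m \<in> borel_measurable borel"
      by (simp add: moll_def[abs_def])
    show "0 \<le> moll \<psi> m x" for x
      using assms(2,4) by (simp add: moll_def)
    show "(\<integral>x. moll \<psi> m x \<partial>lborel) = 1"
      using integral_moll[OF \<psi>_measurable assms(4)] assms(3) by simp
    show "bounded {x. moll \<psi> m x \<noteq> 0}"
      using bounded_moll_support[OF Cc_inf_bounded_support[OF assms(1)] assms(4)] .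
  qed (rule assms(5))
qed

section \<open>Densities and couplings\<close>

lemma P2_integrable: "P2 \<rho> \<Longrightarrow> integrable lborel \<rho>"
  unfolding P2_def by (intro integrableI_nn_integral_finite[where x = 1]) auto

lemma P2_integral: "P2 \<rho> \<Longrightarrow> (\<integral>x. \<rho> x \<partial>lborel) = 1"
  unfolding P2_def by (subst integral_eq_nn_integral) auto

lemma integrable_lipschitz_times_P2:
  fixes \<Phi> \<rho> :: "'a::euclidean_space \<Rightarrow> real"
  assumes \<Phi>: "C-lipschitz_on UNIV \<Phi>" and \<rho>: "P2 \<rho>"
  shows "integrable lborel (\<lambda>x. \<Phi> x * \<rho> x)"
proof -
  have [measurable]: "\<Phi> \<in> borel_measurable borel"
    using lipschitz_on_continuous_on[OF \<Phi>] by (rule borel_measurable_continuous_onI)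
  have [measurable]: "\<rho> \<in> borel_measurable borel" and \<rho>_nonneg: "\<And>x. 0 \<le> \<rho> x"
    and moment: "(\<integral>\<^sup>+x. ennreal (norm x ^ 2 * \<rho> x) \<partial>lborel) < \<infinity>"
    using \<rho> unfolding P2_def by auto
  have "integrable lborel (\<lambda>x. norm x ^ 2 * \<rho> x)"
    using moment \<rho>_nonneg by (intro integrableI_nonneg) auto
  then have bound_int: "integrable lborel (\<lambda>x. (\<bar>\<Phi> 0\<bar> + C) * \<rho> x + C * (norm x ^ 2 * \<rho> x))"
    using P2_integrable[OF \<rho>] by auto
  have \<Phi>_bound: "\<bar>\<Phi> x\<bar> \<le> \<bar>\<Phi> 0\<bar> + C + C * norm x ^ 2" for x
  proof -
    have "\<bar>\<Phi> x\<bar> \<le> \<bar>\<Phi> 0\<bar> + C * norm x"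
      using lipschitz_on_normD[OF \<Phi>, of x 0] by simp
    moreover have "norm x \<le> 1 + norm x ^ 2"
      using sum_squares_bound[of "norm x" 1, simplified] norm_ge_zero[of x] by linarith
    then have "C * norm x \<le> C * (1 + norm x ^ 2)"
      using lipschitz_on_nonneg[OF \<Phi>] by (rule mult_left_mono)
    ultimately show ?thesis
      by (simp add: distrib_left)
  qed
  have "norm (\<Phi> x * \<rho> x) \<le> norm ((\<bar>\<Phi> 0\<bar> + C) * \<rho> x + C * (norm x ^ 2 * \<rho> x))" for x
  proof -
    have "\<bar>\<Phi> x\<bar> * \<rho> x \<le> (\<bar>\<Phi> 0\<bar> + C + C * norm x ^ 2) * \<rho> x"
      using \<Phi>_bound[of x] \<rho>_nonneg[of x] by (rule mult_right_mono)
    then show ?thesis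
      using \<rho>_nonneg[of x] lipschitz_on_nonneg[OF \<Phi>] by (simp add: abs_mult distrib_right mult.assoc)
  qed
  then show ?thesis
    using bound_int by (intro Bochner_Integration.integrable_bound[OF bound_int]) auto
qed

lemma borel_measurable_fst_snd [measurable]:
  "fst \<in> borel_measurable (borel :: ('a::topological_space \<times> 'b::topological_space) measure)"
  "snd \<in> borel_measurable (borel :: ('a::topological_space \<times> 'b::topological_space) measure)"
  by (intro borel_measurable_continuous_onI continuous_intros)+

lemma W2sq_self:
  fixes \<rho> :: "'a::euclidean_space \<Rightarrow> real"
  assumes [measurable]: "\<rho> \<in> borel_measurable borel"
  shows "W2sq \<rho> \<rho> = 0"
proof -
  define D where "D = density lborel (\<lambda>x. ennreal (\<rho> x))"
  define \<gamma> where "\<gamma> = distr D borel (\<lambda>x. (x, x))"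
  have diag[measurable]: "(\<lambda>x::'a. (x, x)) \<in> measurable D borel"
    by (simp add: D_def)
  have marginal: "distr \<gamma> borel \<pi> = D"
    if [measurable]: "\<pi> \<in> borel_measurable borel" and "\<And>x. \<pi> (x, x) = x" for \<pi> :: "'a \<times> 'a \<Rightarrow> 'a"
    unfolding \<gamma>_def using that(2) by (subst distr_distr) (auto simp: comp_def D_def intro!: distr_id2)
  have "\<gamma> \<in> couplings \<rho> \<rho>"
    using marginal[of fst] marginal[of snd] by (simp add: couplings_def \<gamma>_def D_def)
  then have "W2sq \<rho> \<rho> \<le> (\<integral>\<^sup>+p. ennreal ((norm (fst p - snd p))\<^sup>2) \<partial>\<gamma>)"
    unfolding W2sq_def by (rule INF_lower)
  also have "\<dots> = 0"
    unfolding \<gamma>_def by (subst nn_integral_distr) auto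
  finally show ?thesis by simp
qed

lemma coupling_marginal_integral:
  fixes f \<rho> :: "'a::euclidean_space \<Rightarrow> real"
  assumes marginal: "distr \<gamma> borel \<pi> = density lborel (\<lambda>x. ennreal (\<rho> x))"
    and [measurable]: "\<pi> \<in> measurable \<gamma> borel" "\<rho> \<in> borel_measurable borel" "f \<in> borel_measurable borel"
    and \<rho>_nonneg: "\<And>x. 0 \<le> \<rho> x" and int: "integrable lborel (\<lambda>x. f x * \<rho> x)"
  shows "integrable \<gamma> (\<lambda>p. f (\<pi> p))" "(\<integral>x. f x * \<rho> x \<partial>lborel) = (\<integral>p. f (\<pi> p) \<partial>\<gamma>)"
proof -
  have "integrable (distr \<gamma> borel \<pi>) f"
    unfolding marginal using int \<rho>_nonneg by (subst integrable_density) (auto simp: mult.commute)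
  then show "integrable \<gamma> (\<lambda>p. f (\<pi> p))"
    by (simp add: integrable_distr_eq)
  have "(\<integral>p. f (\<pi> p) \<partial>\<gamma>) = (\<integral>x. f x \<partial>distr \<gamma> borel \<pi>)"
    by (simp add: integral_distr)
  also have "\<dots> = (\<integral>x. \<rho> x *\<^sub>R f x \<partial>lborel)"
    unfolding marginal using \<rho>_nonneg by (subst integral_density) auto
  finally show "(\<integral>x. f x * \<rho> x \<partial>lborel) = (\<integral>p. f (\<pi> p) \<partial>\<gamma>)"
    by (simp add: mult.commute)
qed

lemma couplings_measurable: "\<gamma> \<in> couplings \<rho> \<nu> \<Longrightarrow> measurable \<gamma> N = measurable borel N"
  unfolding couplings_def by (auto intro!: measurable_cong_sets)

lemma coupling_prob_space:
  assumes "\<gamma> \<in> couplings \<rho> \<nu>" "P2 \<rho>"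
  shows "prob_space \<gamma>"
proof
  have [measurable]: "\<rho> \<in> borel_measurable borel"
    using assms(2) by (simp add: P2_def)
  have "fst \<in> measurable \<gamma> borel"
    unfolding couplings_measurable[OF assms(1)] by measurable
  then have "emeasure \<gamma> (space \<gamma>) = emeasure (distr \<gamma> borel fst) UNIV"
    by (simp add: emeasure_distr)
  also have "\<dots> = 1"
    using assms unfolding couplings_def P2_def by (simp add: emeasure_density)
  finally show "emeasure \<gamma> (space \<gamma>) = 1" .
qed

lemma lipschitz_young_bound:
  fixes \<Phi> :: "'a::real_normed_vector \<Rightarrow> real"
  assumes \<Phi>: "C-lipschitz_on UNIV \<Phi>"
  shows "2 * \<tau> * (\<Phi> x - \<Phi> y) - C\<^sup>2 * \<tau>\<^sup>2 \<le> (norm (x - y))\<^sup>2"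
proof -
  have "2 * \<tau> * (\<Phi> x - \<Phi> y) \<le> 2 * \<bar>\<tau>\<bar> * \<bar>\<Phi> x - \<Phi> y\<bar>"
    by (simp add: abs_mult[symmetric])
  also have "\<dots> \<le> 2 * \<bar>\<tau>\<bar> * (C * norm (x - y))"
    using lipschitz_on_normD[OF \<Phi>, of x y] by (intro mult_left_mono) simp_all
  also have "\<dots> = 2 * \<bar>C * \<tau>\<bar> * norm (x - y)"
    using lipschitz_on_nonneg[OF \<Phi>] by (simp add: abs_mult)
  also have "\<dots> \<le> (norm (x - y))\<^sup>2 + (C * \<tau>)\<^sup>2"
    using sum_squares_bound[of "\<bar>C * \<tau>\<bar>" "norm (x - y)"] by (simp add: mult.commute)
  finally show ?thesis
    by (simp add: power_mult_distrib)
qed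

lemma ennreal_integral_le_nn_integral:
  fixes f :: "'b \<Rightarrow> real"
  assumes "integrable M f"
  shows "ennreal (\<integral>x. f x \<partial>M) \<le> (\<integral>\<^sup>+x. ennreal (f x) \<partial>M)"
proof -
  have "ennreal (\<integral>x. f x \<partial>M) \<le> ennreal (\<integral>x. max (f x) 0 \<partial>M)"
    using assms by (intro ennreal_leI integral_mono) auto
  also have "\<dots> = (\<integral>\<^sup>+x. ennreal (max (f x) 0) \<partial>M)"
    using assms by (intro nn_integral_eq_integral[symmetric]) auto
  finally show ?thesis
    by (simp add: ennreal_max_0)
qed

lemma coupling_lipschitz_energy_gap:
  fixes \<Phi> \<rho> \<nu> :: "'a::euclidean_space \<Rightarrow> real"
  assumes \<gamma>: "\<gamma> \<in> couplings \<rho> \<nu>" and \<rho>: "P2 \<rho>" and \<nu>: "P2 \<nu>" and \<Phi>: "C-lipschitz_on UNIV \<Phi>"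
  shows "ennreal (2 * \<tau> * ((\<integral>x. \<Phi> x * \<rho> x \<partial>lborel) - (\<integral>x. \<Phi> x * \<nu> x \<partial>lborel)) - C\<^sup>2 * \<tau>\<^sup>2)
    \<le> (\<integral>\<^sup>+p. ennreal ((norm (fst p - snd p))\<^sup>2) \<partial>\<gamma>)"
proof -
  interpret prob_space \<gamma>
    using \<gamma> \<rho> by (rule coupling_prob_space)
  have [measurable]: "\<Phi> \<in> borel_measurable borel"
    using lipschitz_on_continuous_on[OF \<Phi>] by (rule borel_measurable_continuous_onI)
  have [measurable]: "\<rho> \<in> borel_measurable borel" "\<nu> \<in> borel_measurable borel"
    and nonneg: "\<And>x. 0 \<le> \<rho> x" "\<And>x. 0 \<le> \<nu> x"
    using \<rho> \<nu> by (simp_all add: P2_def)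
  have marginals: "distr \<gamma> borel fst = density lborel (\<lambda>x. ennreal (\<rho> x))"
      "distr \<gamma> borel snd = density lborel (\<lambda>x. ennreal (\<nu> x))"
    using \<gamma> by (simp_all add: couplings_def)
  have [measurable]: "fst \<in> measurable \<gamma> borel" "snd \<in> measurable \<gamma> borel"
    unfolding couplings_measurable[OF \<gamma>] by (rule borel_measurable_fst_snd)+
  note fst_int = coupling_marginal_integral[OF marginals(1) _ _ _ nonneg(1)
      integrable_lipschitz_times_P2[OF \<Phi> \<rho>]]
  note snd_int = coupling_marginal_integral[OF marginals(2) _ _ _ nonneg(2)
      integrable_lipschitz_times_P2[OF \<Phi> \<nu>]]
  define g where "g p = 2 * \<tau> * (\<Phi> (fst p) - \<Phi> (snd p)) - C\<^sup>2 * \<tau>\<^sup>2" for p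
  have "2 * \<tau> * ((\<integral>x. \<Phi> x * \<rho> x \<partial>lborel) - (\<integral>x. \<Phi> x * \<nu> x \<partial>lborel)) - C\<^sup>2 * \<tau>\<^sup>2
      = (\<integral>p. g p \<partial>\<gamma>)"
    using fst_int snd_int by (simp add: g_def prob_space)
  also have "ennreal \<dots> \<le> (\<integral>\<^sup>+p. ennreal (g p) \<partial>\<gamma>)"
    unfolding g_def[abs_def] using fst_int(1) snd_int(1) by (intro ennreal_integral_le_nn_integral) simp
  also have "\<dots> \<le> (\<integral>\<^sup>+p. ennreal ((norm (fst p - snd p))\<^sup>2) \<partial>\<gamma>)"
    unfolding g_def using lipschitz_young_bound[OF \<Phi>] by (intro nn_integral_mono ennreal_leI)
  finally show ?thesis .
qed

lemma W2sq_lipschitz_energy_gap: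
  fixes \<Phi> \<rho> \<nu> :: "'a::euclidean_space \<Rightarrow> real"
  assumes "P2 \<rho>" "P2 \<nu>" "C-lipschitz_on UNIV \<Phi>"
  shows "ennreal (2 * \<tau> * ((\<integral>x. \<Phi> x * \<rho> x \<partial>lborel) - (\<integral>x. \<Phi> x * \<nu> x \<partial>lborel)) - C\<^sup>2 * \<tau>\<^sup>2)
    \<le> W2sq \<rho> \<nu>"
  unfolding W2sq_def using assms by (intro INF_greatest coupling_lipschitz_energy_gap)

section \<open>The one-step minimization problem\<close>

lemma P2_powr_integrable_le_one:
  fixes \<rho> :: "'a::euclidean_space \<Rightarrow> real"
  assumes \<rho>: "P2 \<rho>" and le1: "AE x in lborel. \<rho> x \<le> 1" and m: "1 \<le> m"
  shows "integrable lborel (\<lambda>x. \<rho> x powr m)" "(\<integral>x. \<rho> x powr m \<partial>lborel) \<le> 1"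
proof -
  have [measurable]: "\<rho> \<in> borel_measurable borel" and nonneg: "\<And>x. 0 \<le> \<rho> x"
    using \<rho> by (auto simp: P2_def)
  have le: "AE x in lborel. \<rho> x powr m \<le> \<rho> x"
    using le1
  proof eventually_elim
    case (elim x)
    then show ?case
      using powr_mono'[of 1 m "\<rho> x"] nonneg[of x] m by simp
  qed
  show int: "integrable lborel (\<lambda>x. \<rho> x powr m)"
  proof (rule Bochner_Integration.integrable_bound[OF P2_integrable[OF \<rho>]])
    show "(\<lambda>x. \<rho> x powr m) \<in> borel_measurable lborel"
      by measurable
    show "AE x in lborel. norm (\<rho> x powr m) \<le> norm (\<rho> x)"
      using le by eventually_elim (use nonneg in auto)
  qed
  have "(\<integral>x. \<rho> x powr m \<partial>lborel) \<le> (\<integral>x. \<rho> x \<partial>lborel)"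
    using int P2_integrable[OF \<rho>] le by (rule integral_mono_AE)
  then show "(\<integral>x. \<rho> x powr m \<partial>lborel) \<le> 1"
    using P2_integral[OF \<rho>] by simp
qed

lemma JKO_obj_self:
  assumes "\<rho> \<in> borel_measurable borel"
  shows "JKO_obj \<psi> m \<mu> \<tau> \<rho> \<rho> = Em \<psi> m \<mu> \<rho>"
proof -
  have "enn2ereal (W2sq \<rho> \<rho>) = 0"
    using W2sq_self[OF assms] by (simp add: zero_ennreal.rep_eq)
  then show ?thesis
    by (simp add: JKO_obj_def)
qed

lemma ennreal_le_imp_le_enn2real: "ennreal x \<le> y \<Longrightarrow> y \<noteq> \<top> \<Longrightarrow> x \<le> enn2real y"
  by (cases y rule: ennreal_cases) auto

lemma JKO_obj_le_realD:
  fixes \<rho> \<nu> :: "'a::euclidean_space \<Rightarrow> real"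
  assumes le: "JKO_obj \<psi> m \<mu> \<tau> \<rho> \<nu> \<le> ereal r" and \<tau>: "0 < \<tau>"
  shows "integrable lborel (\<lambda>x. \<nu> x powr m)" "integrable lborel (\<lambda>x. mollNpot \<psi> m \<mu> x * \<nu> x)"
    and "W2sq \<rho> \<nu> \<noteq> \<top>"
    and "enn2real (W2sq \<rho> \<nu>) / (2 * \<tau>) + (\<integral>x. \<nu> x powr m \<partial>lborel) / (m - 1)
      + (\<integral>x. mollNpot \<psi> m \<mu> x * \<nu> x \<partial>lborel) \<le> r"
proof -
  have transport_nonneg: "0 \<le> enn2ereal (W2sq \<rho> \<nu>) / ereal (2 * \<tau>)"
    using \<tau> by (intro zero_le_divide_ereal) auto
  have "Em \<psi> m \<mu> \<nu> \<noteq> \<infinity>"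
  proof
    assume "Em \<psi> m \<mu> \<nu> = \<infinity>"
    then have "JKO_obj \<psi> m \<mu> \<tau> \<rho> \<nu> = \<infinity>"
      using transport_nonneg by (simp add: JKO_obj_def)
    with le show False by simp
  qed
  then show "integrable lborel (\<lambda>x. \<nu> x powr m)" "integrable lborel (\<lambda>x. mollNpot \<psi> m \<mu> x * \<nu> x)"
    by (auto simp: Em_def split: if_splits)
  then have Em: "Em \<psi> m \<mu> \<nu>
      = ereal ((\<integral>x. \<nu> x powr m \<partial>lborel) / (m - 1) + (\<integral>x. mollNpot \<psi> m \<mu> x * \<nu> x \<partial>lborel))"
    by (simp add: Em_def)
  show "W2sq \<rho> \<nu> \<noteq> \<top>"
  proof
    assume "W2sq \<rho> \<nu> = \<top>"
    then have "JKO_obj \<psi> m \<mu> \<tau> \<rho> \<nu> = \<infinity>"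
      using \<tau> by (simp add: JKO_obj_def Em)
    with le show False by simp
  qed
  then obtain w where w: "W2sq \<rho> \<nu> = ennreal w" "0 \<le> w"
    by (cases "W2sq \<rho> \<nu>" rule: ennreal_cases) auto
  have "JKO_obj \<psi> m \<mu> \<tau> \<rho> \<nu> = ereal (w / (2 * \<tau>)
      + ((\<integral>x. \<nu> x powr m \<partial>lborel) / (m - 1) + (\<integral>x. mollNpot \<psi> m \<mu> x * \<nu> x \<partial>lborel)))"
    using w \<tau> by (simp add: JKO_obj_def Em)
  with le w show "enn2real (W2sq \<rho> \<nu>) / (2 * \<tau>) + (\<integral>x. \<nu> x powr m \<partial>lborel) / (m - 1)
      + (\<integral>x. mollNpot \<psi> m \<mu> x * \<nu> x \<partial>lborel) \<le> r"
    by simp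
qed

lemma JKO_minimizer_powr_integral_bound:
  fixes \<psi> \<rho> \<mu> \<rho>' :: "'a::euclidean_space \<Rightarrow> real"
  assumes \<Phi>: "C-lipschitz_on UNIV (mollNpot \<psi> m \<mu>)" and \<rho>: "P2 \<rho>" "AE x in lborel. \<rho> x \<le> 1"
    and \<tau>: "0 < \<tau>" and m: "1 < m" and min: "is_JKO_minimizer \<psi> m \<mu> \<tau> \<rho> \<rho>'"
  shows "integrable lborel (\<lambda>x. \<rho>' x powr m)"
    and "(\<integral>x. \<rho>' x powr m \<partial>lborel) \<le> 1 + (m - 1) * C\<^sup>2 * \<tau> / 2"
proof -
  define B where "B = (\<integral>x. mollNpot \<psi> m \<mu> x * \<rho> x \<partial>lborel)"
  define B' where "B' = (\<integral>x. mollNpot \<psi> m \<mu> x * \<rho>' x \<partial>lborel)"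
  define a where "a = (\<integral>x. \<rho> x powr m \<partial>lborel)"
  define A' where "A' = (\<integral>x. \<rho>' x powr m \<partial>lborel)"
  have \<rho>': "P2 \<rho>'"
    using min by (simp add: is_JKO_minimizer_def)
  have \<rho>_measurable: "\<rho> \<in> borel_measurable borel"
    using \<rho>(1) by (simp add: P2_def)
  note \<rho>_powr = P2_powr_integrable_le_one[OF \<rho>, of m]
  have "JKO_obj \<psi> m \<mu> \<tau> \<rho> \<rho>' \<le> JKO_obj \<psi> m \<mu> \<tau> \<rho> \<rho>"
    using min \<rho>(1) by (simp add: is_JKO_minimizer_def)
  also have "\<dots> = ereal (a / (m - 1) + B)"
    using \<rho>_powr m integrable_lipschitz_times_P2[OF \<Phi> \<rho>(1)]
    by (simp add: JKO_obj_self[OF \<rho>_measurable] Em_def a_def B_def)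
  finally have "JKO_obj \<psi> m \<mu> \<tau> \<rho> \<rho>' \<le> ereal (a / (m - 1) + B)" .
  note energy = JKO_obj_le_realD[OF this \<tau>, folded A'_def B'_def]
  then show "integrable lborel (\<lambda>x. \<rho>' x powr m)"
    by blast
  have "2 * \<tau> * (B - B') - C\<^sup>2 * \<tau>\<^sup>2 \<le> enn2real (W2sq \<rho> \<rho>')"
    using ennreal_le_imp_le_enn2real[OF W2sq_lipschitz_energy_gap[OF \<rho>(1) \<rho>' \<Phi>] energy(3)]
    by (simp add: B_def B'_def)
  then have "(2 * \<tau> * (B - B') - C\<^sup>2 * \<tau>\<^sup>2) / (2 * \<tau>) \<le> enn2real (W2sq \<rho> \<rho>') / (2 * \<tau>)"
    using \<tau> by (intro divide_right_mono) simp_all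
  moreover have "(2 * \<tau> * (B - B') - C\<^sup>2 * \<tau>\<^sup>2) / (2 * \<tau>) = B - B' - C\<^sup>2 * \<tau> / 2"
    using \<tau> by (simp add: field_simps power2_eq_square)
  ultimately have "A' / (m - 1) \<le> a / (m - 1) + C\<^sup>2 * \<tau> / 2"
    using energy(4) by linarith
  then have "(m - 1) * (A' / (m - 1)) \<le> (m - 1) * (a / (m - 1) + C\<^sup>2 * \<tau> / 2)"
    using m by (intro mult_left_mono) simp_all
  then have "A' \<le> a + (m - 1) * C\<^sup>2 * \<tau> / 2"
    using m by (simp add: distrib_left)
  then show "A' \<le> 1 + (m - 1) * C\<^sup>2 * \<tau> / 2"
    using \<rho>_powr(2) m unfolding a_def by linarith
qed

section \<open>From an \<open>L\<^sup>m\<close> bound to a bound on the excess mass\<close>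

lemma Bernoulli_inequality_powr:
  fixes r t :: real
  assumes r: "1 \<le> r" and t: "1 \<le> t"
  shows "1 + r * (t - 1) \<le> t powr r"
proof -
  let ?f = "\<lambda>x. x powr r - r * (x - 1)"
  have "?f 1 \<le> ?f t"
  proof (rule DERIV_nonneg_imp_nondecreasing[OF t])
    fix x :: real assume x: "1 \<le> x" "x \<le> t"
    have "(?f has_real_derivative (r * x powr (r - 1) - r * 1)) (at x)"
      using x by (auto intro!: derivative_eq_intros)
    moreover have "0 \<le> r * x powr (r - 1) - r * 1"
      using r ge_one_powr_ge_zero[OF x(1), of "r - 1"] by (simp add: mult_left_mono[of 1 _ r, simplified])
    ultimately show "\<exists>y. (?f has_real_derivative y) (at x) \<and> 0 \<le> y"
      by blast
  qed
  then show ?thesis by simp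
qed

lemma powr_ge_quadratic:
  fixes m t :: real
  assumes m: "2 \<le> m" and t: "1 \<le> t"
  shows "m * (m - 1) / 2 * (t - 1)\<^sup>2 \<le> t powr m"
proof -
  let ?f = "\<lambda>x. x powr m - m * (m - 1) / 2 * (x - 1)\<^sup>2"
  have "?f 1 \<le> ?f t"
  proof (rule DERIV_nonneg_imp_nondecreasing[OF t])
    fix x :: real assume x: "1 \<le> x" "x \<le> t"
    have "(?f has_real_derivative (m * x powr (m - 1) - m * (m - 1) * (x - 1))) (at x)"
      using x by (auto intro!: derivative_eq_intros)
    moreover have "m * (m - 1) * (x - 1) \<le> m * x powr (m - 1)"
    proof -
      have "m * (m - 1) * (x - 1) \<le> m * (1 + (m - 1) * (x - 1))"
        using m by (simp add: algebra_simps)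
      also have "\<dots> \<le> m * x powr (m - 1)"
        using Bernoulli_inequality_powr[of "m - 1" x] x m by simp
      finally show ?thesis .
    qed
    ultimately show "\<exists>y. (?f has_real_derivative y) (at x) \<and> 0 \<le> y"
      by force
  qed
  then show ?thesis by simp
qed

lemma excess_le_powr_plus_linear:
  fixes t m s :: real
  assumes t: "0 \<le> t" and m: "2 \<le> m" and s: "0 < s"
  shows "t - 1 \<le> t powr m / (m * (m - 1) * s) + s * t / 2"
proof (cases "1 \<le> t")
  case False
  moreover have "0 \<le> t powr m / (m * (m - 1) * s)"
    using m s by simp
  moreover have "0 \<le> s * t / 2"
    using t s by simp
  ultimately show ?thesis
    by linarith
next
  case True
  have "t - 1 \<le> (t - 1)\<^sup>2 / (2 * s) + s / 2"
    using sum_squares_bound[of s "t - 1"] s by (simp add: field_simps power2_eq_square)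
  also have "(t - 1)\<^sup>2 / (2 * s) = m * (m - 1) / 2 * (t - 1)\<^sup>2 / (m * (m - 1) * s)"
    using m s by (simp add: field_simps)
  also have "\<dots> \<le> t powr m / (m * (m - 1) * s)"
    using powr_ge_quadratic[OF m True] m s by (intro divide_right_mono) simp_all
  finally have "t - 1 \<le> t powr m / (m * (m - 1) * s) + s / 2"
    by simp
  moreover have "s / 2 \<le> s * t / 2"
    using mult_left_mono[OF True, of s] s by simp
  ultimately show ?thesis
    by linarith
qed

lemma nn_integral_excess_le:
  fixes \<nu> :: "'a::euclidean_space \<Rightarrow> real"
  assumes \<nu>: "P2 \<nu>" and int: "integrable lborel (\<lambda>x. \<nu> x powr m)" and m: "2 \<le> m" and s: "0 < s"
    and bound: "(\<integral>x. \<nu> x powr m \<partial>lborel) \<le> m * (m - 1) * s\<^sup>2 / 2"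
  shows "(\<integral>\<^sup>+x. ennreal (\<nu> x - 1) \<partial>lborel) \<le> ennreal s"
proof -
  define f where "f x = \<nu> x powr m / (m * (m - 1) * s) + s * \<nu> x / 2" for x
  have nonneg: "\<And>x. 0 \<le> \<nu> x"
    using \<nu> by (simp add: P2_def)
  have "integrable lborel (\<lambda>x. \<nu> x powr m / (m * (m - 1) * s))"
    using int by (rule integrable_divide)
  moreover have "integrable lborel (\<lambda>x. s * \<nu> x / 2)"
    using P2_integrable[OF \<nu>] by (intro integrable_divide integrable_mult_right)
  ultimately have f_int: "integrable lborel f"
    unfolding f_def[abs_def] by (rule Bochner_Integration.integrable_add)
  have "(\<integral>\<^sup>+x. ennreal (\<nu> x - 1) \<partial>lborel) \<le> (\<integral>\<^sup>+x. ennreal (f x) \<partial>lborel)"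
    using excess_le_powr_plus_linear[OF nonneg m s] by (intro nn_integral_mono ennreal_leI) (simp add: f_def)
  also have "\<dots> = ennreal (\<integral>x. f x \<partial>lborel)"
    using nonneg m s by (intro nn_integral_eq_integral[OF f_int]) (auto simp: f_def)
  also have "(\<integral>x. f x \<partial>lborel) = (\<integral>x. \<nu> x powr m \<partial>lborel) / (m * (m - 1) * s) + s / 2"
    using int P2_integrable[OF \<nu>] P2_integral[OF \<nu>] by (simp add: f_def)
  also have "\<dots> \<le> s"
    using bound m s by (simp add: field_simps power2_eq_square)
  finally show ?thesis
    by (simp add: ennreal_leI)
qed

theorem lemma2p16:
  fixes \<psi> \<rho> \<mu> \<rho>' :: "'a::euclidean_space \<Rightarrow> real" and C \<tau> m :: real
  assumes "Cc_inf \<psi>" "\<forall>x. 0 \<le> \<psi> x" "(\<integral>x. \<psi> x \<partial>lborel) = 1"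
    and "Cd_const TYPE('a) C"
    and "P2 \<rho>" "P2 \<mu>" "AE x in lborel. \<rho> x \<le> 1" "AE x in lborel. \<mu> x \<le> 1"
    and "0 < \<tau>" "\<tau> < 1" "2 \<le> m"
    and "is_JKO_minimizer \<psi> m \<mu> \<tau> \<rho> \<rho>'"
  shows "(\<integral>\<^sup>+x. ennreal (\<rho>' x - 1) \<partial>lborel) \<le> ennreal (sqrt ((2 + C\<^sup>2) / m))"
proof -
  have "C-lipschitz_on UNIV (mollNpot \<psi> m \<mu>)"
    using assms(1-3,11) Npot_lipschitz[OF assms(4,6,8)] by (intro mollNpot_lipschitz) auto
  note powr_bound = JKO_minimizer_powr_integral_bound[OF this assms(5,7,9) _ assms(12)]
  define s where "s = sqrt ((2 + C\<^sup>2) / m)"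
  have s: "0 < s" and s2: "m * (m - 1) * s\<^sup>2 / 2 = (m - 1) + (m - 1) * C\<^sup>2 / 2"
    using assms(11) by (simp_all add: s_def add_pos_nonneg field_simps)
  have "(m - 1) * C\<^sup>2 * \<tau> / 2 \<le> (m - 1) * C\<^sup>2 / 2"
    using assms(10,11) mult_left_le[of \<tau> "(m - 1) * C\<^sup>2"] by simp
  then have "(\<integral>x. \<rho>' x powr m \<partial>lborel) \<le> m * (m - 1) * s\<^sup>2 / 2"
    unfolding s2 using powr_bound(2) assms(11) by linarith
  moreover have "P2 \<rho>'"
    using assms(12) by (simp add: is_JKO_minimizer_def)
  ultimately show ?thesis
    using nn_integral_excess_le[OF _ powr_bound(1) assms(11) s] assms(11) by (simp add: s_def)
qed

end
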